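(* The map $G$ is strongly transitive on $(\mathcal{X},d)$: for all $x,y\in\mathcal{X}$ and every $r>0$ there exist $z\in\mathcal{X}$ with $d(z,x)\le r$ and $n\in\mathbb{N}^*$ such that $G^n(z)=y$.
   Context: Fix an integer $\mathsf{N}\ge 1$ and write $\llbracket a;b\rrbracket=\{a,a+1,\dots,b\}$. Let $f:\mathbb{Z}/4\mathbb{Z}\to\mathbb{Z}/4\mathbb{Z}$, $f(x)=x+1 \pmod 4$, with $f^{-1}(x)=x-1\pmod 4$ and $f^0=\mathrm{id}$. Let $\mathrm{sign}(x)=1$ if $x>0$, $0$ if $x=0$, $-1$ if $x<0$. For $k\in\llbracket -\mathsf{N};\mathsf{N}\rrbracket$ define $f_k:(\mathbb{Z}/4\mathbb{Z})^{\mathsf{N}}\to(\mathbb{Z}/4\mathbb{Z})^{\mathsf{N}}$ by $f_k(C_1,\dots,C_{\mathsf{N}})=(C_1,\dots,C_{|k|-1},f^{\mathrm{sign}(k)}(C_{|k|}),\dots,f^{\mathrm{sign}(k)}(C_{\mathsf{N}}))$ (so $f_0$ is the identity). Folding sequences are $F=(F^j)_{j\in\mathbb{N}}\in\llbracket -\mathsf{N};\mathsf{N}\rrbracket^{\mathbb{N}}$; let $i(F)=F^0$ and let $\sigma$ be the shift, $\sigma((F^j)_{j})=(F^{j+1})_{j}$. A finite sequence $(k_1,\dots,k_n)$ is identified with $(k_1,\dots,k_n,0,0,\dots)$. On $\check{\mathcal{X}}=(\mathbb{Z}/4\mathbb{Z})^{\mathsf{N}}\times\llbracket -\mathsf{N};\mathsf{N}\rrbracket^{\mathbb{N}}$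 define $G((C,F))=(f_{i(F)}(C),\sigma(F))$. SAW requirement: for $C\in(\mathbb{Z}/4\mathbb{Z})^{\mathsf{N}}$ let $p(C)=(X_0,\dots,X_{\mathsf{N}})\in(\mathbb{Z}^2)^{\mathsf{N}+1}$ with $X_0=(0,0)$ and $X_i=X_{i-1}+v(C_i)$, where $v(0)=(1,0)$, $v(1)=(0,-1)$, $v(2)=(-1,0)$, $v(3)=(0,1)$. $C$ satisfies the SAW requirement iff the points $X_0,\dots,X_{\mathsf{N}}$ are pairwise distinct. Let $\mathfrak{C}_{\mathsf{N}}$ be the set of $C\in(\mathbb{Z}/4\mathbb{Z})^{\mathsf{N}}$ for which there exist $n\ge1$ and $k_1,\dots,k_n\in\llbracket -\mathsf{N};\mathsf{N}\rrbracket$ such that $C$ is the first component of $G^n(((0,\dots,0),(k_1,\dots,k_n)))$ and, for every $i\le n$, the first component of $G^i(((0,\dots,0),(k_1,\dots,k_n)))$ satisfies the SAW requirement. Let $\mathcal{X}=\mathfrak{C}_{\mathsf{N}}\times\llbracket -\mathsf{N};\mathsf{N}\rrbracket^{\mathbb{N}}$ with metric $d((C,F),(\check C,\check F))=d_C(C,\check C)+d_F(F,\check F)$, where $d_C(C,\check C)=\sum_{k=1}^{\mathsf{N}}\delta(C_k,\check C_k)2^{\mathsf{N}-k}$ ($\delta(a,b)=0$ if $a=b$, $1$ otherwise) and $d_F(F,\check F)=\frac{9}{2\mathsf{N}}\sum_{k=0}^{\infty}\frac{|F^k-\check F^k|}{10^{k+1}}$. The paper regards $G$ as a self-map of $\mathcal{X}$.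 *)

theory Defs
  imports "HOL-Analysis.Analysis" "HOL-Library.Numeral_Type"
begin

text \<open>List position j (0-based) corresponds to index j+1 in the paper.\<close>

type_synonym conf = "4 list"
type_synonym fseq = "nat \<Rightarrow> int"

definition fold_k :: "int \<Rightarrow> conf \<Rightarrow> conf" where
  "fold_k k C = map (\<lambda>j. if \<bar>k\<bar> \<le> int (Suc j) then C ! j + of_int (sgn k) else C ! j)
                   [0..<length C]"

definition shift :: "fseq \<Rightarrow> fseq" where
  "shift F = (\<lambda>j. F (Suc j))"

definition G :: "conf \<times> fseq \<Rightarrow> conf \<times> fseq" where
  "G x = (fold_k (snd x 0) (fst x), shift (snd x))"

definition finseq :: "int list \<Rightarrow> fseq" where
  "finseq ks = (\<lambda>j. if j < length ks then ks ! j else 0)"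

definition v :: "4 \<Rightarrow> int \<times> int" where
  "v c = (if c = 0 then (1, 0) else if c = 1 then (0, -1) else if c = 2 then (-1, 0) else (0, 1))"

definition pos :: "conf \<Rightarrow> nat \<Rightarrow> int \<times> int" where
  "pos C i = (\<Sum>j<i. v (C ! j))"

definition saw :: "conf \<Rightarrow> bool" where
  "saw C \<longleftrightarrow> inj_on (pos C) {0..length C}"

definition frakC :: "nat \<Rightarrow> conf set" where
  "frakC N = {C. \<exists>ks. length ks \<ge> 1 \<and> set ks \<subseteq> {- int N..int N} \<and>
      fst ((G ^^ length ks) (replicate N 0, finseq ks)) = C \<and>
      (\<forall>i\<in>{1..length ks}. saw (fst ((G ^^ i) (replicate N 0, finseq ks))))}"

definition Xsp :: "nat \<Rightarrow> (conf \<times> fseq) set" where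
  "Xsp N = frakC N \<times> {F. \<forall>j. F j \<in> {- int N..int N}}"

definition dC :: "nat \<Rightarrow> conf \<Rightarrow> conf \<Rightarrow> real" where
  "dC N C C' = (\<Sum>k=1..N. (if C ! (k - 1) = C' ! (k - 1) then 0 else 1) * 2 ^ (N - k))"

definition dF :: "nat \<Rightarrow> fseq \<Rightarrow> fseq \<Rightarrow> real" where
  "dF N F F' = 9 / (2 * real N) * (\<Sum>k. real_of_int \<bar>F k - F' k\<bar> / 10 ^ (k + 1))"

definition dX :: "nat \<Rightarrow> conf \<times> fseq \<Rightarrow> conf \<times> fseq \<Rightarrow> real" where
  "dX N x y = dC N (fst x) (fst y) + dF N (snd x) (snd y)"

end

theory Submission
  imports Defs
begin

text \<open>The witness keeps the configuration of \<open>x\<close> and a long prefix of its folding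
  sequence, so it is close to \<open>x\<close>; after that prefix the sequence spells a word of folds
  steering the current configuration to that of \<open>y\<close>, and then continues as the sequence
  of \<open>y\<close>. Such a word always exists: \<open>f\<^sub>1\<close> adds \<open>1\<close> to every letter, and
  \<open>f\<^sub>k\<^sub>+\<^sub>1\<close> acts on the tail as \<open>f\<^sub>k\<close>, so by induction on the length any
  configuration is turned into any other by folds with indices in \<open>{1..N}\<close>. No
  self-avoidance condition arises, because only the starting point is required to lie
  in the space.\<close>

definition fold_word :: "conf \<Rightarrow> int list \<Rightarrow> conf" where
  "fold_word C ks = foldl (\<lambda>C k. fold_k k C) C ks"

definition splice :: "int list \<Rightarrow> fseq \<Rightarrow> fseq" where
  "splice ks F = (\<lambda>j. if j < length ks then ks ! j else F (j - length ks))"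

lemma length_fold_k [simp]: "length (fold_k k C) = length C"
  by (simp add: fold_k_def)

lemma fold_k_0 [simp]: "fold_k 0 C = C"
  unfolding fold_k_def by (rule nth_equalityI) simp_all

lemma fold_k_1: "fold_k 1 C = map (\<lambda>c. c + 1) C"
  unfolding fold_k_def by (rule nth_equalityI) simp_all

lemma fold_k_Suc_Cons: "k \<ge> 1 \<Longrightarrow> fold_k (k + 1) (c # C) = c # fold_k k C"
  unfolding fold_k_def
  by (rule nth_equalityI) (auto simp del: upt_Suc simp: sgn_if nth_Cons split: nat.split)

lemma fold_word_Nil [simp]: "fold_word C [] = C"
  by (simp add: fold_word_def)

lemma fold_word_Cons: "fold_word C (k # ks) = fold_word (fold_k k C) ks"
  by (simp add: fold_word_def)

lemma fold_word_append: "fold_word C (ks @ ls) = fold_word (fold_word C ks) ls"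
  by (simp add: fold_word_def)

lemma length_fold_word [simp]: "length (fold_word C ks) = length C"
  by (induction ks arbitrary: C) (simp_all add: fold_word_Cons)

lemma fold_word_replicate_1: "fold_word C (replicate t 1) = map (\<lambda>c. c + of_nat t) C"
  by (induction t arbitrary: C) (simp_all add: fold_word_Cons fold_k_1 algebra_simps)

lemma fold_word_Cons_shift:
  "set ks \<subseteq> {1..} \<Longrightarrow> fold_word (c # C) (map (\<lambda>k. k + 1) ks) = c # fold_word C ks"
  by (induction ks arbitrary: C) (simp_all add: fold_word_Cons fold_k_Suc_Cons)

lemma funpow_G_splice: "(G ^^ length ks) (C, splice ks F) = (fold_word C ks, F)"
proof (induction ks arbitrary: C)
  case Nil
  then show ?case by (simp add: splice_def)
next
  case (Cons k ks)
  have "shift (splice (k # ks) F) = splice ks F"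
    by (auto simp: shift_def splice_def)
  then have "G (C, splice (k # ks) F) = (fold_k k C, splice ks F)"
    by (simp add: G_def splice_def)
  then show ?case
    by (simp only: length_Cons funpow_Suc_right o_apply Cons.IH fold_word_Cons)
qed

lemma splice_in: "set ks \<subseteq> S \<Longrightarrow> \<forall>j. F j \<in> S \<Longrightarrow> splice ks F j \<in> S"
  by (auto simp: splice_def)

lemma length_funpow_G: "length (fst ((G ^^ n) x)) = length (fst x)"
  by (induction n) (simp_all add: G_def)

lemma length_frakC: "C \<in> frakC N \<Longrightarrow> length C = N"
  unfolding frakC_def by (auto simp: length_funpow_G)

lemma bit0_eq_of_nat: "\<exists>t. (x :: 'a::finite bit0) = of_nat t"
  by (cases x rule: bit0_cases) (metis of_nat_nat of_int_of_nat_eq)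

lemma fold_word_reachable:
  "length C = length D \<Longrightarrow> \<exists>ks. set ks \<subseteq> {1..int (length C)} \<and> fold_word C ks = D"
proof (induction D arbitrary: C)
  case Nil
  then show ?case by (intro exI[of _ "[]"]) simp
next
  case (Cons d D')
  obtain c C' where C: "C = c # C'" and len: "length C' = length D'"
    using Cons.prems by (cases C) auto
  obtain t where t: "d - c = of_nat t" using bit0_eq_of_nat[of "d - c"] by auto
  obtain ks where ks: "set ks \<subseteq> {1..int (length C')}"
    and to_D': "fold_word (map (\<lambda>c. c + of_nat t) C') ks = D'"
    using Cons.IH[of "map (\<lambda>c. c + of_nat t) C'"] len by auto
  let ?ks = "replicate t 1 @ map (\<lambda>k. k + 1) ks"
  have "fold_word (c # C') ?ks = fold_word ((c + of_nat t) # map (\<lambda>c. c + of_nat t) C') (map (\<lambda>k. k + 1) ks)"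
    by (simp add: fold_word_append fold_word_replicate_1)
  also have "\<dots> = (c + of_nat t) # D'"
    using ks to_D' by (subst fold_word_Cons_shift) auto
  also have "c + of_nat t = d" using t by (simp add: algebra_simps)
  finally have "fold_word C ?ks = d # D'" using C by simp
  moreover have "set ?ks \<subseteq> {1..int (length C)}" using ks C by auto
  ultimately show ?case by blast
qed

lemma dF_le_pow_if_agree:
  assumes "N \<ge> 1" and bounded: "\<forall>k. \<bar>F k - F' k\<bar> \<le> 2 * int N" and agree: "\<forall>k<m. F k = F' k"
  shows "dF N F F' \<le> (1/10) ^ m"
proof -
  define f where "f k = real_of_int \<bar>F k - F' k\<bar> / 10 ^ (k + 1)" for k
  define g where "g k = 2 * real N * (1/10) ^ m * (1/10) * (1/10) ^ k" for k
  have g_sums: "g sums (2 * real N * (1/10) ^ m * (1/10) * (1 / (1 - 1/10)))"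
    unfolding g_def by (intro sums_mult geometric_sums) auto
  have f_tail_le: "f (k + m) \<le> g k" for k
  proof -
    have "real_of_int \<bar>F (k + m) - F' (k + m)\<bar> \<le> 2 * real N"
      using bounded[rule_format, of "k + m"] by linarith
    then have "f (k + m) \<le> 2 * real N / 10 ^ (k + m + 1)"
      unfolding f_def by (intro divide_right_mono) auto
    also have "\<dots> = g k" unfolding g_def by (simp add: power_add power_one_over field_simps)
    finally show ?thesis .
  qed
  have tail_summable: "summable (\<lambda>k. f (k + m))"
    by (rule summable_comparison_test'[OF sums_summable[OF g_sums]]) (use f_tail_le in \<open>auto simp: f_def\<close>)
  have "suminf f = suminf (\<lambda>k. f (k + m)) + sum f {..<m}"
    using suminf_split_initial_segment[of f m] tail_summable summable_iff_shift by auto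
  also have "sum f {..<m} = 0" using agree by (simp add: f_def)
  also have "suminf (\<lambda>k. f (k + m)) \<le> suminf g"
    by (rule suminf_le) (use f_tail_le tail_summable sums_summable[OF g_sums] in auto)
  also have "suminf g = 2 * real N * (1/10) ^ m / 9" using sums_unique[OF g_sums] by simp
  finally have "9 / (2 * real N) * suminf f \<le> 9 / (2 * real N) * (2 * real N * (1/10) ^ m / 9)"
    using \<open>N \<ge> 1\<close> by (intro mult_left_mono) auto
  also have "\<dots> = (1/10) ^ m" using \<open>N \<ge> 1\<close> by simp
  finally show ?thesis unfolding dF_def f_def .
qed

lemma exists_word_extending:
  assumes "length C = N" and "length D = N" and "set ps \<subseteq> {- int N..int N}"
  shows "\<exists>ks. ps @ ks \<noteq> [] \<and> set (ps @ ks) \<subseteq> {- int N..int N} \<and> fold_word C (ps @ ks) = D"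
proof -
  obtain ks where ks: "set ks \<subseteq> {1..int N}" "fold_word (fold_word C ps) ks = D"
    using fold_word_reachable[of "fold_word C ps" D] assms(1,2) by auto
  \<comment> \<open>The fold \<open>0\<close> does nothing; it only makes the word nonempty.\<close>
  have "fold_word C (ps @ 0 # ks) = D" using ks(2) by (simp add: fold_word_append fold_word_Cons)
  moreover have "set (ps @ 0 # ks) \<subseteq> {- int N..int N}" using assms(3) ks(1) by auto
  ultimately show ?thesis by blast
qed

lemma dF_splice_prefix_le:
  assumes "N \<ge> 1" and "set (map F [0..<m] @ ks) \<subseteq> {- int N..int N}"
    and "\<forall>j. F j \<in> {- int N..int N}" and "\<forall>j. F' j \<in> {- int N..int N}"
  shows "dF N (splice (map F [0..<m] @ ks) F') F \<le> (1/10) ^ m"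
proof (rule dF_le_pow_if_agree[OF \<open>N \<ge> 1\<close>])
  show "\<forall>k. \<bar>splice (map F [0..<m] @ ks) F' k - F k\<bar> \<le> 2 * int N"
  proof
    fix k
    have "splice (map F [0..<m] @ ks) F' k \<in> {- int N..int N}" using assms(2,4) by (rule splice_in)
    then show "\<bar>splice (map F [0..<m] @ ks) F' k - F k\<bar> \<le> 2 * int N"
      using assms(3)[rule_format, of k] by auto
  qed
  show "\<forall>k<m. splice (map F [0..<m] @ ks) F' k = F k"
    by (simp add: splice_def nth_append)
qed

theorem mainTheorem4:
  fixes N :: nat and x y :: "conf \<times> fseq" and r :: real
  assumes "N \<ge> 1" and "x \<in> Xsp N" and "y \<in> Xsp N" and "r > 0"
  shows "\<exists>z\<in>Xsp N. dX N z x \<le> r \<and> (\<exists>n::nat. n \<ge> 1 \<and> (G ^^ n) z = y)"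
proof -
  obtain Cx Fx Cy Fy where x: "x = (Cx, Fx)" and y: "y = (Cy, Fy)"
    by (cases x, cases y)
  have Cx: "Cx \<in> frakC N" and Fx: "\<forall>j. Fx j \<in> {- int N..int N}"
    and Cy: "Cy \<in> frakC N" and Fy: "\<forall>j. Fy j \<in> {- int N..int N}"
    using assms(2,3) x y by (auto simp: Xsp_def)
  obtain m where m: "(1/10::real) ^ m < r" using real_arch_pow_inv[OF \<open>r > 0\<close>, of "1/10"] by auto
  have "set (map Fx [0..<m]) \<subseteq> {- int N..int N}" using Fx by auto
  then obtain ks where word: "map Fx [0..<m] @ ks \<noteq> []"
    "set (map Fx [0..<m] @ ks) \<subseteq> {- int N..int N}" "fold_word Cx (map Fx [0..<m] @ ks) = Cy"
    using exists_word_extending length_frakC[OF Cx] length_frakC[OF Cy] by blast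
  define z where "z = (Cx, splice (map Fx [0..<m] @ ks) Fy)"
  have "z \<in> Xsp N" using Cx splice_in[OF word(2) Fy] by (simp add: z_def Xsp_def)
  moreover have "(G ^^ length (map Fx [0..<m] @ ks)) z = y"
    unfolding z_def funpow_G_splice word(3) y ..
  moreover have "dX N z x \<le> r"
    using dF_splice_prefix_le[OF \<open>N \<ge> 1\<close> word(2) Fx Fy] m by (simp add: dX_def dC_def z_def x)
  moreover have "length (map Fx [0..<m] @ ks) \<ge> 1" using word(1) by (simp add: Suc_le_eq)
  ultimately show ?thesis by blast
qed

end
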